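(* (i) For all closed infinite $\lambda$-preterms $s$ and $t$: the equation $\lambda.s=\lambda.t$ has a completed derivation in $\mathbf{EQ}_\alpha^\infty$ if and only if $s\equiv_\alpha t$. (ii) For all prefixed infinite $\lambda$-terms $M$ and $N$: $M=N$ has a completed derivation in $\mathbf{EQ}^\infty$ if and only if $M=N$.
   Context: Infinite $\lambda$-preterms are possibly infinite terms built from named variables, abstractions $\lambda y.s$ and applications $s\,t$ (not identified modulo $\alpha$-equivalence); $\equiv_\alpha$ is $\alpha$-equivalence; infinite $\lambda$-terms are their $\alpha$-equivalence classes. A prefixed (pre)term is $\lambda x_1\ldots x_n.s$ ($n\ge0$, distinct variables, separate abstraction prefix; $\lambda.s$ for the empty prefix) with the free variables of $s$ among the $x_i$. The proof system $\mathbf{EQ}_\alpha^\infty$ derives equations between prefixed preterms with prefixes of equal length, with rules: axiom $\lambda x_1\ldots x_n y.y=\lambda z_1\ldots z_n u.u$; from $\lambda x_1\ldots x_n.s=\lambda z_1\ldots z_n.t$ infer $\lambda x_1\ldots x_n y.s=\lambda z_1\ldots z_n w.t$ provided $y$ is not free in $s$ and $w$ is not free in $t$; from $\lambda\vec{x}y.s=\lambda\vec{z}u.t$ infer $\lambda\vec{x}.\lambda y.s=\lambda\vec{z}.\lambda u.t$; from $\lambda\vec{x}.s_0=\lambda\vec{y}.t_0$ and $\lambda\vec{x}.s_1=\lambda\vec{y}.t_1$ infer $\lambda\vec{x}.(s_0\,s_1)=\lambda\vec{y}.(t_0\,t_1)$. $\mathbf{EQ}^\infty$ has the same rules for prefixed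 terms (modulo $\alpha$). A completed derivation is a possibly infinite proof tree built from these rules in which every maximal finite path ends in an axiom.
   Formalization: Prefixes of prefixed preterms need not consist of distinct variables, so the rules of $\mathbf{EQ}_\alpha^\infty$ may produce repeated prefix variables, with the rightmost occurrence binding. The statement above fails without it. *)

theory Defs
  imports Main
begin

text \<open>Possibly infinite preterms over named variables of type 'v (not modulo alpha).\<close>
codatatype 'v pterm = Var 'v | Abs 'v "'v pterm" | App "'v pterm" "'v pterm"

text \<open>Free variables (a free occurrence lies at finite depth, hence inductive).\<close>
inductive free :: "'v \<Rightarrow> 'v pterm \<Rightarrow> bool" where
  free_Var: "free x (Var x)"
| free_Abs: "free x s \<Longrightarrow> x \<noteq> y \<Longrightarrow> free x (Abs y s)"
| free_App1: "free x s \<Longrightarrow> free x (App s t)"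
| free_App2: "free x t \<Longrightarrow> free x (App s t)"

definition closed :: "'v pterm \<Rightarrow> bool" where
  "closed s \<longleftrightarrow> (\<forall>x. \<not> free x s)"

codatatype 'v dbterm = DFree 'v | DBound nat | DAbs "'v dbterm" | DApp "'v dbterm" "'v dbterm"

fun idx :: "'v list \<Rightarrow> 'v \<Rightarrow> nat option" where
  "idx [] x = None"
| "idx (y # ys) x = (if x = y then Some 0 else map_option Suc (idx ys x))"

text \<open>Gamma is the stack of enclosing binders, innermost first.\<close>
primcorec db :: "'v list \<Rightarrow> 'v pterm \<Rightarrow> 'v dbterm" where
  "db \<Gamma> s = (case s of
      Var x \<Rightarrow> (case idx \<Gamma> x of None \<Rightarrow> DFree x | Some i \<Rightarrow> DBound i)
    | Abs x u \<Rightarrow> DAbs (db (x # \<Gamma>) u)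
    | App u v \<Rightarrow> DApp (db \<Gamma> u) (db \<Gamma> v))"

definition alpha :: "'v pterm \<Rightarrow> 'v pterm \<Rightarrow> bool" where
  "alpha s t \<longleftrightarrow> db [] s = db [] t"

text \<open>A prefixed preterm \<lambda>x1...xn.s is represented by the pair (xs, s).\<close>
type_synonym 'v ppt = "'v list \<times> 'v pterm"

definition prefixed :: "'v ppt \<Rightarrow> bool" where
  "prefixed P \<longleftrightarrow> (\<forall>x. free x (snd P) \<longrightarrow> x \<in> set (fst P))"

text \<open>Derivability by a completed (possibly infinite) derivation: greatest fixed point.\<close>
coinductive EQa :: "'v ppt \<Rightarrow> 'v ppt \<Rightarrow> bool" where
  EQa_ax: "length xs = length zs \<Longrightarrow> EQa (xs @ [y], Var y) (zs @ [u], Var u)"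
| EQa_wk: "length xs = length zs \<Longrightarrow> EQa (xs, s) (zs, t) \<Longrightarrow> \<not> free y s \<Longrightarrow> \<not> free w t
           \<Longrightarrow> EQa (xs @ [y], s) (zs @ [w], t)"
| EQa_lam: "length xs = length zs \<Longrightarrow> EQa (xs @ [y], s) (zs @ [u], t)
           \<Longrightarrow> EQa (xs, Abs y s) (zs, Abs u t)"
| EQa_app: "length xs = length zs \<Longrightarrow> EQa (xs, s0) (zs, t0) \<Longrightarrow> EQa (xs, s1) (zs, t1)
           \<Longrightarrow> EQa (xs, App s0 s1) (zs, App t0 t1)"

fun abss :: "'v list \<Rightarrow> 'v pterm \<Rightarrow> 'v pterm" where
  "abss [] s = s"
| "abss (x # xs) s = Abs x (abss xs s)"

definition palpha :: "'v ppt \<Rightarrow> 'v ppt \<Rightarrow> bool" where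
  "palpha P Q \<longleftrightarrow> prefixed P \<and> prefixed Q \<and> length (fst P) = length (fst Q)
     \<and> alpha (abss (fst P) (snd P)) (abss (fst Q) (snd Q))"

lemma palpha_part_equivp: "part_equivp (palpha :: 'v ppt \<Rightarrow> 'v ppt \<Rightarrow> bool)"
proof (rule part_equivpI)
  fix a :: 'v
  have "\<not> free x (Abs a (Var a))" for x
    by (auto elim: free.cases)
  then have "palpha ([], Abs a (Var a)) ([], Abs a (Var a))"
    by (simp add: palpha_def prefixed_def alpha_def)
  then show "\<exists>x :: 'v ppt. palpha x x" by (rule exI)
  show "symp (palpha :: 'v ppt \<Rightarrow> _)" by (auto simp: symp_def palpha_def alpha_def)
  show "transp (palpha :: 'v ppt \<Rightarrow> _)" by (auto simp: transp_def palpha_def alpha_def)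
qed

quotient_type 'v pfterm = "'v ppt" / partial: palpha
  by (rule palpha_part_equivp)

coinductive EQ :: "'v pfterm \<Rightarrow> 'v pfterm \<Rightarrow> bool" where
  EQ_ax: "length xs = length zs
     \<Longrightarrow> EQ (abs_pfterm (xs @ [y], Var y)) (abs_pfterm (zs @ [u], Var u))"
| EQ_wk: "length xs = length zs \<Longrightarrow> prefixed (xs, s) \<Longrightarrow> prefixed (zs, t)
     \<Longrightarrow> EQ (abs_pfterm (xs, s)) (abs_pfterm (zs, t)) \<Longrightarrow> \<not> free y s \<Longrightarrow> \<not> free w t
     \<Longrightarrow> EQ (abs_pfterm (xs @ [y], s)) (abs_pfterm (zs @ [w], t))"
| EQ_lam: "length xs = length zs \<Longrightarrow> prefixed (xs @ [y], s) \<Longrightarrow> prefixed (zs @ [u], t)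
     \<Longrightarrow> EQ (abs_pfterm (xs @ [y], s)) (abs_pfterm (zs @ [u], t))
     \<Longrightarrow> EQ (abs_pfterm (xs, Abs y s)) (abs_pfterm (zs, Abs u t))"
| EQ_app: "length xs = length zs \<Longrightarrow> prefixed (xs, s0) \<Longrightarrow> prefixed (zs, t0)
     \<Longrightarrow> prefixed (xs, s1) \<Longrightarrow> prefixed (zs, t1)
     \<Longrightarrow> EQ (abs_pfterm (xs, s0)) (abs_pfterm (zs, t0)) \<Longrightarrow> EQ (abs_pfterm (xs, s1)) (abs_pfterm (zs, t1))
     \<Longrightarrow> EQ (abs_pfterm (xs, App s0 s1)) (abs_pfterm (zs, App t0 t1))"

end

theory Submission
  imports Defs
begin

text \<open>
  Passing to the nameless (de Bruijn) representation turns \<open>\<alpha>\<close>-equivalence of prefixed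
  preterms into equality of codata. Completeness: every \<open>\<alpha>\<close>-equivalent pair is the
  conclusion of a rule whose premises are again \<open>\<alpha>\<close>-equivalent, so coinduction yields a
  completed derivation. Soundness: a derivation induces a bisimulation on nameless terms.
  Weakening produces no constructor, but it shortens the prefix, so only finitely many
  weakenings precede a productive rule; the index shifts they cause are absorbed by closing
  the bisimulation under renamings of bound indices. For \<open>EQ\<^sup>\<infinity>\<close> the same argument is run on
  representatives, whose rules are those of \<open>EQ\<^sub>\<alpha>\<^sup>\<infinity>\<close> up to \<open>\<alpha>\<close>-conversion of the conclusion.
\<close>

lemma db_Var: "db \<Gamma> (Var x) = (case idx \<Gamma> x of None \<Rightarrow> DFree x | Some i \<Rightarrow> DBound i)"
  by (subst db.code) simp

lemma db_Abs [simp]: "db \<Gamma> (Abs x u) = DAbs (db (x # \<Gamma>) u)"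
  by (subst db.code) simp

lemma db_App [simp]: "db \<Gamma> (App u v) = DApp (db \<Gamma> u) (db \<Gamma> v)"
  by (subst db.code) simp

lemma db_eq_DBound_iff: "db \<Gamma> t = DBound i \<longleftrightarrow> (\<exists>a. t = Var a \<and> idx \<Gamma> a = Some i)"
  by (cases t) (auto simp: db_Var split: option.splits)

lemma db_eq_DAbs_iff: "db \<Gamma> t = DAbs b \<longleftrightarrow> (\<exists>u t'. t = Abs u t' \<and> b = db (u # \<Gamma>) t')"
  by (cases t) (auto simp: db_Var split: option.splits)

lemma db_eq_DApp_iff: "db \<Gamma> t = DApp b c \<longleftrightarrow> (\<exists>t0 t1. t = App t0 t1 \<and> b = db \<Gamma> t0 \<and> c = db \<Gamma> t1)"
  by (cases t) (auto simp: db_Var split: option.splits)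

lemma idx_eq_Some_iff: "(\<exists>i. idx \<Gamma> x = Some i) \<longleftrightarrow> x \<in> set \<Gamma>"
  by (induction \<Gamma>) auto

inductive_simps free_Var_iff [simp]: "free x (Var y)"
inductive_simps free_Abs_iff [simp]: "free x (Abs y s)"
inductive_simps free_App_iff [simp]: "free x (App s t)"

definition dbterm_step :: "('v dbterm \<Rightarrow> 'v dbterm \<Rightarrow> bool) \<Rightarrow> 'v dbterm \<Rightarrow> 'v dbterm \<Rightarrow> bool" where
  "dbterm_step R a b \<longleftrightarrow> (\<exists>x. a = DFree x \<and> b = DFree x) \<or> (\<exists>i. a = DBound i \<and> b = DBound i)
      \<or> (\<exists>a' b'. a = DAbs a' \<and> b = DAbs b' \<and> R a' b')
      \<or> (\<exists>a1 a2 b1 b2. a = DApp a1 a2 \<and> b = DApp b1 b2 \<and> R a1 b1 \<and> R a2 b2)"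

lemma dbterm_eq_coinduct:
  assumes "R a b" and step: "\<And>a b. R a b \<Longrightarrow> dbterm_step R a b"
  shows "a = b"
  using assms(1)
proof (coinduction arbitrary: a b rule: dbterm.coinduct)
  case (Eq_dbterm a b)
  from step[OF this] show ?case by (auto simp: dbterm_step_def)
qed

definition lift :: "(nat \<Rightarrow> nat) \<Rightarrow> nat \<Rightarrow> nat" where
  "lift f i = (case i of 0 \<Rightarrow> 0 | Suc j \<Rightarrow> Suc (f j))"

lemma lift_comp: "lift f \<circ> lift g = lift (f \<circ> g)"
  by (auto simp: lift_def fun_eq_iff split: nat.splits)

lemma lift_id: "lift id = id"
  by (auto simp: lift_def fun_eq_iff split: nat.splits)

primcorec ren :: "(nat \<Rightarrow> nat) \<Rightarrow> 'v dbterm \<Rightarrow> 'v dbterm" where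
  "ren f a = (case a of DFree x \<Rightarrow> DFree x | DBound i \<Rightarrow> DBound (f i)
     | DAbs b \<Rightarrow> DAbs (ren (lift f) b) | DApp b c \<Rightarrow> DApp (ren f b) (ren f c))"

lemma ren_simps [simp]:
  "ren f (DFree x) = DFree x"
  "ren f (DBound i) = DBound (f i)"
  "ren f (DAbs b) = DAbs (ren (lift f) b)"
  "ren f (DApp b c) = DApp (ren f b) (ren f c)"
  by (subst ren.code; simp)+

lemma ren_ren: "ren f (ren g a) = ren (f \<circ> g) (a :: 'v dbterm)"
proof (rule dbterm_eq_coinduct[where R = "\<lambda>x y :: 'v dbterm. \<exists>f g a. x = ren f (ren g a) \<and> y = ren (f \<circ> g) a"])
  fix x y :: "'v dbterm"
  assume "\<exists>f g a. x = ren f (ren g a) \<and> y = ren (f \<circ> g) a"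
  then obtain f g a where "x = ren f (ren g a)" "y = ren (f \<circ> g) a" by blast
  then show "dbterm_step (\<lambda>x y. \<exists>f g a. x = ren f (ren g a) \<and> y = ren (f \<circ> g) a) x y"
    by (cases a) (auto simp: dbterm_step_def lift_comp[symmetric])
qed blast

lemma ren_id [simp]: "ren id a = (a :: 'v dbterm)"
proof (rule dbterm_eq_coinduct[where R = "\<lambda>x y :: 'v dbterm. x = ren id y"])
  fix x y :: "'v dbterm"
  assume "x = ren id y"
  then show "dbterm_step (\<lambda>x y. x = ren id y) x y"
    by (cases y) (auto simp: dbterm_step_def lift_id)
qed simp

lemma db_eq_ren_db:
  fixes s :: "'v pterm"
  assumes "\<forall>x. free x s \<longrightarrow> idx \<Gamma>' x = map_option f (idx \<Gamma> x)"
  shows "db \<Gamma>' s = ren f (db \<Gamma> s)"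
proof -
  define B :: "'v dbterm \<Rightarrow> 'v dbterm \<Rightarrow> bool"
    where "B a b \<longleftrightarrow> (\<exists>\<Gamma> \<Gamma>' f s. (\<forall>x. free x s \<longrightarrow> idx \<Gamma>' x = map_option f (idx \<Gamma> x))
      \<and> a = db \<Gamma>' s \<and> b = ren f (db \<Gamma> s))" for a b
  have step: "dbterm_step B (db \<Gamma>' s) (ren f (db \<Gamma> s))"
    if agree: "\<forall>x. free x s \<longrightarrow> idx \<Gamma>' x = map_option f (idx \<Gamma> x)" for \<Gamma> \<Gamma>' f s
  proof (cases s)
    case (Var x)
    then show ?thesis using agree by (auto simp: dbterm_step_def db_Var split: option.splits)
  next
    case (Abs y u)
    have "\<forall>x. free x u \<longrightarrow> idx (y # \<Gamma>') x = map_option (lift f) (idx (y # \<Gamma>) x)"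
      using agree Abs by (auto simp: lift_def option.map_comp o_def)
    then show ?thesis unfolding Abs db_Abs ren_simps dbterm_step_def B_def by blast
  next
    case (App u v)
    have "\<forall>x. free x u \<longrightarrow> idx \<Gamma>' x = map_option f (idx \<Gamma> x)"
      and "\<forall>x. free x v \<longrightarrow> idx \<Gamma>' x = map_option f (idx \<Gamma> x)"
      using agree App by auto
    then show ?thesis unfolding App db_App ren_simps dbterm_step_def B_def by blast
  qed
  show ?thesis
  proof (rule dbterm_eq_coinduct[of B])
    show "B (db \<Gamma>' s) (ren f (db \<Gamma> s))"
      using assms unfolding B_def by blast
  qed (auto simp: B_def intro: step)
qed

text \<open>The last variable of the prefix is the innermost binder, i.e.\ de Bruijn index \<open>0\<close>.\<close>

definition nameless :: "'v ppt \<Rightarrow> 'v dbterm" where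
  "nameless P = db (rev (fst P)) (snd P)"

lemma nameless_snoc_Var [simp]: "nameless (xs @ [y], Var y) = DBound 0"
  by (simp add: nameless_def db_Var)

lemma nameless_Abs [simp]: "nameless (xs, Abs y s) = DAbs (nameless (xs @ [y], s))"
  by (simp add: nameless_def)

lemma nameless_App [simp]: "nameless (xs, App s t) = DApp (nameless (xs, s)) (nameless (xs, t))"
  by (simp add: nameless_def)

lemma nameless_snoc_not_free:
  "\<not> free y s \<Longrightarrow> nameless (xs @ [y], s) = ren Suc (nameless (xs, s))"
  unfolding nameless_def by (auto intro: db_eq_ren_db)

lemma db_abss: "db \<Gamma> (abss xs s) = (DAbs ^^ length xs) (db (rev xs @ \<Gamma>) s)"
  by (induction xs arbitrary: \<Gamma>) (simp_all add: funpow_swap1)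

lemma DAbs_funpow_inject: "(DAbs ^^ n) a = (DAbs ^^ n) b \<longleftrightarrow> a = b"
  by (induction n) auto

lemma palpha_iff_nameless:
  "palpha P Q \<longleftrightarrow> prefixed P \<and> prefixed Q \<and> length (fst P) = length (fst Q)
     \<and> nameless P = nameless Q"
  by (auto simp: palpha_def alpha_def nameless_def db_abss DAbs_funpow_inject)

lemma abs_pfterm_eq_iff:
  "prefixed P \<Longrightarrow> prefixed Q \<Longrightarrow> abs_pfterm P = abs_pfterm Q \<longleftrightarrow> palpha P Q"
  using Quotient3_rel[OF Quotient3_pfterm, of P Q] by (simp add: palpha_iff_nameless)

lemma prefixed_rep_pfterm: "prefixed (rep_pfterm M)"
  using Quotient3_rep_reflp[OF Quotient3_pfterm, of M] by (simp add: palpha_def)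

lemma prefixed_Abs: "prefixed (xs, Abs y s) \<longleftrightarrow> prefixed (xs @ [y], s)"
  unfolding prefixed_def by auto

lemma prefixed_App: "prefixed (xs, App s t) \<longleftrightarrow> prefixed (xs, s) \<and> prefixed (xs, t)"
  unfolding prefixed_def by auto

inductive eq_step :: "('v ppt \<Rightarrow> 'v ppt \<Rightarrow> bool) \<Rightarrow> 'v ppt \<Rightarrow> 'v ppt \<Rightarrow> bool" for R where
  eq_step_ax: "length xs = length zs \<Longrightarrow> eq_step R (xs @ [y], Var y) (zs @ [u], Var u)"
| eq_step_wk: "length xs = length zs \<Longrightarrow> R (xs, s) (zs, t) \<Longrightarrow> \<not> free y s \<Longrightarrow> \<not> free w t
    \<Longrightarrow> eq_step R (xs @ [y], s) (zs @ [w], t)"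
| eq_step_lam: "length xs = length zs \<Longrightarrow> R (xs @ [y], s) (zs @ [u], t)
    \<Longrightarrow> eq_step R (xs, Abs y s) (zs, Abs u t)"
| eq_step_app: "length xs = length zs \<Longrightarrow> R (xs, s0) (zs, t0) \<Longrightarrow> R (xs, s1) (zs, t1)
    \<Longrightarrow> eq_step R (xs, App s0 s1) (zs, App t0 t1)"

lemma eq_step_length: "eq_step R P Q \<Longrightarrow> length (fst P) = length (fst Q)"
  by (induction rule: eq_step.induct) simp_all

lemma nameless_eq_coinduct:
  fixes R :: "'v ppt \<Rightarrow> 'v ppt \<Rightarrow> bool"
  assumes "R P Q"
    and step: "\<And>P Q. R P Q \<Longrightarrow> \<exists>P' Q'. length (fst P') = length (fst P)
      \<and> nameless P' = nameless P \<and> nameless Q' = nameless Q \<and> eq_step R P' Q'"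
  shows "nameless P = nameless Q"
proof -
  define B :: "'v dbterm \<Rightarrow> 'v dbterm \<Rightarrow> bool"
    where "B a b \<longleftrightarrow> (\<exists>f P Q. R P Q \<and> a = ren f (nameless P) \<and> b = ren f (nameless Q))" for a b
  have B_step: "dbterm_step B (ren f (nameless P)) (ren f (nameless Q))" if "R P Q" for f P Q
    using that
    \<comment> \<open>weakening is not guarded by a constructor, but it shortens the prefix\<close>
  proof (induction "length (fst P)" arbitrary: f P Q rule: less_induct)
    case less
    then obtain P' Q' where len: "length (fst P') = length (fst P)"
      and eq: "nameless P' = nameless P" "nameless Q' = nameless Q" and "eq_step R P' Q'"
      using step by metis
    from \<open>eq_step R P' Q'\<close>
    have "dbterm_step B (ren f (nameless P')) (ren f (nameless Q'))"
    proof cases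
      case (eq_step_ax xs zs y u)
      then show ?thesis by (simp add: dbterm_step_def)
    next
      case (eq_step_wk xs zs s t y w)
      then have "dbterm_step B (ren (f \<circ> Suc) (nameless (xs, s))) (ren (f \<circ> Suc) (nameless (zs, t)))"
        using less.hyps len by simp
      then show ?thesis
        using eq_step_wk by (simp add: nameless_snoc_not_free ren_ren)
    next
      case (eq_step_lam xs zs y s u t)
      then show ?thesis unfolding dbterm_step_def B_def by fastforce
    next
      case (eq_step_app xs zs s0 t0 s1 t1)
      then show ?thesis unfolding dbterm_step_def B_def by fastforce
    qed
    then show ?case by (simp only: eq)
  qed
  have "ren id (nameless P) = ren id (nameless Q)"
  proof (rule dbterm_eq_coinduct[of B])
    show "B (ren id (nameless P)) (ren id (nameless Q))"
      using assms(1) unfolding B_def by blast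
  next
    fix a b
    assume "B a b"
    then obtain f P Q where "R P Q" "a = ren f (nameless P)" "b = ren f (nameless Q)"
      unfolding B_def by blast
    then show "dbterm_step B a b" using B_step by blast
  qed
  then show ?thesis by simp
qed

lemma eq_step_palpha_Var:
  assumes "palpha (xs, Var x) (zs, t)"
  shows "eq_step palpha (xs, Var x) (zs, t)"
proof -
  from assms have len: "length xs = length zs" and "x \<in> set xs"
    and eq: "db (rev xs) (Var x) = db (rev zs) t"
    by (auto simp: palpha_iff_nameless nameless_def prefixed_def)
  then obtain i where i: "idx (rev xs) x = Some i"
    using idx_eq_Some_iff[of "rev xs" x] by auto
  with eq have "db (rev zs) t = DBound i" by (simp add: db_Var)
  then obtain a where t: "t = Var a" and a: "idx (rev zs) a = Some i"
    by (auto simp: db_eq_DBound_iff)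
  obtain xs' y where xs: "xs = xs' @ [y]"
    using \<open>x \<in> set xs\<close> by (cases xs rule: rev_exhaust) auto
  obtain zs' b where zs: "zs = zs' @ [b]"
    using a by (cases zs rule: rev_exhaust) auto
  show ?thesis
  proof (cases "x = y")
    case True
    then have "a = b" using i a xs zs by (auto split: if_splits)
    then show ?thesis using True t xs zs len by (auto intro: eq_step_ax)
  next
    case False
    then obtain j where "i = Suc j" and j: "idx (rev xs') x = Some j" using i xs by auto
    then have "a \<noteq> b" and j': "idx (rev zs') a = Some j" using a zs by (auto split: if_splits)
    have "palpha (xs', Var x) (zs', Var a)"
      using j j' idx_eq_Some_iff[of "rev xs'" x] idx_eq_Some_iff[of "rev zs'" a] len xs zs
      by (auto simp: palpha_iff_nameless nameless_def prefixed_def db_Var)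
    then show ?thesis using False \<open>a \<noteq> b\<close> t xs zs len by (auto intro: eq_step_wk)
  qed
qed

lemma eq_step_if_palpha:
  assumes "palpha P Q"
  shows "eq_step palpha P Q"
proof -
  obtain xs s zs t where P: "P = (xs, s)" and Q: "Q = (zs, t)" by fastforce
  from assms have pal: "palpha (xs, s) (zs, t)" by (simp add: P Q)
  then have pre: "prefixed (xs, s)" "prefixed (zs, t)" and len: "length xs = length zs"
    and eq: "db (rev xs) s = db (rev zs) t"
    by (auto simp: palpha_iff_nameless nameless_def)
  have "eq_step palpha (xs, s) (zs, t)"
  proof (cases s)
    case (Var x)
    show ?thesis using pal unfolding Var by (rule eq_step_palpha_Var)
  next
    case (Abs y s')
    with eq[symmetric] obtain u t' where "t = Abs u t'" and "db (y # rev xs) s' = db (u # rev zs) t'"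
      by (auto simp: db_eq_DAbs_iff)
    moreover have "palpha (xs @ [y], s') (zs @ [u], t')"
      using calculation pre len Abs by (simp add: palpha_iff_nameless nameless_def prefixed_Abs)
    ultimately show ?thesis using Abs len by (auto intro: eq_step_lam)
  next
    case (App s0 s1)
    with eq[symmetric] obtain t0 t1 where "t = App t0 t1" and "db (rev xs) s0 = db (rev zs) t0"
      and "db (rev xs) s1 = db (rev zs) t1"
      by (auto simp: db_eq_DApp_iff)
    moreover have "palpha (xs, s0) (zs, t0)" and "palpha (xs, s1) (zs, t1)"
      using calculation pre len App by (simp_all add: palpha_iff_nameless nameless_def prefixed_App)
    ultimately show ?thesis using App len by (auto intro: eq_step_app)
  qed
  then show ?thesis by (simp add: P Q)
qed

lemma EQa_if_palpha: "palpha P Q \<Longrightarrow> EQa P Q"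
proof (coinduction arbitrary: P Q rule: EQa.coinduct)
  case (EQa P Q)
  from eq_step_if_palpha[OF this] show ?case
    by cases auto
qed

lemma nameless_eq_if_EQa: "EQa P Q \<Longrightarrow> nameless P = nameless Q"
proof (erule nameless_eq_coinduct)
  fix P Q :: "'v ppt"
  assume "EQa P Q"
  then have "eq_step EQa P Q"
    by cases (auto intro: eq_step.intros)
  then show "\<exists>P' Q'. length (fst P') = length (fst P) \<and> nameless P' = nameless P
      \<and> nameless Q' = nameless Q \<and> eq_step EQa P' Q'"
    by blast
qed

lemma EQa_closed_iff_alpha:
  assumes "closed s" and "closed t"
  shows "EQa ([], s) ([], t) \<longleftrightarrow> alpha s t"
proof
  assume "EQa ([], s) ([], t)"
  then show "alpha s t"
    using nameless_eq_if_EQa by (fastforce simp: alpha_def nameless_def)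
next
  assume "alpha s t"
  with assms have "palpha ([], s) ([], t)"
    by (simp add: palpha_iff_nameless nameless_def prefixed_def closed_def alpha_def)
  then show "EQa ([], s) ([], t)" by (rule EQa_if_palpha)
qed

lemma prefixed_if_palpha: "palpha P Q \<Longrightarrow> prefixed P \<and> prefixed Q"
  by (simp add: palpha_def)

lemma EQ_if_palpha: "palpha P Q \<Longrightarrow> EQ (abs_pfterm P) (abs_pfterm Q)"
proof (coinduction arbitrary: P Q rule: EQ.coinduct)
  case (EQ P Q)
  from eq_step_if_palpha[OF this] show ?case
  proof cases
    case (eq_step_ax xs zs y u)
    then show ?thesis by (intro disjI1) auto
  next
    case (eq_step_wk xs zs s t y w)
    then show ?thesis using prefixed_if_palpha by (intro disjI2 disjI1) blast
  next
    case (eq_step_lam xs zs y s u t)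
    then show ?thesis using prefixed_if_palpha by (intro disjI2 disjI1) blast
  next
    case (eq_step_app xs zs s0 t0 s1 t1)
    then show ?thesis using prefixed_if_palpha by (intro disjI2) blast
  qed
qed

definition EQ_rep :: "'v ppt \<Rightarrow> 'v ppt \<Rightarrow> bool" where
  "EQ_rep P Q \<longleftrightarrow> prefixed P \<and> prefixed Q \<and> EQ (abs_pfterm P) (abs_pfterm Q)"

lemma EQ_rep_eq_step:
  assumes "EQ_rep P Q"
  shows "\<exists>P' Q'. palpha P P' \<and> palpha Q Q' \<and> eq_step EQ_rep P' Q'"
proof -
  from assms have pre: "prefixed P" "prefixed Q" and "EQ (abs_pfterm P) (abs_pfterm Q)"
    by (simp_all add: EQ_rep_def)
  from this(3) show ?thesis
  proof cases
    case (EQ_ax xs zs y u)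
    then have "palpha P (xs @ [y], Var y)" "palpha Q (zs @ [u], Var u)"
      using pre by (simp_all add: abs_pfterm_eq_iff prefixed_def)
    with EQ_ax show ?thesis by (blast intro: eq_step_ax)
  next
    case (EQ_wk xs zs s t y w)
    then have "palpha P (xs @ [y], s)" "palpha Q (zs @ [w], t)"
      using pre by (simp_all add: abs_pfterm_eq_iff prefixed_def)
    with EQ_wk show ?thesis by (blast intro: eq_step_wk[of xs zs EQ_rep] EQ_rep_def[THEN iffD2])
  next
    case (EQ_lam xs zs y s u t)
    then have "palpha P (xs, Abs y s)" "palpha Q (zs, Abs u t)"
      using pre by (simp_all add: abs_pfterm_eq_iff prefixed_Abs)
    with EQ_lam show ?thesis by (blast intro: eq_step_lam EQ_rep_def[THEN iffD2])
  next
    case (EQ_app xs zs s0 t0 s1 t1)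
    then have "palpha P (xs, App s0 s1)" "palpha Q (zs, App t0 t1)"
      using pre by (simp_all add: abs_pfterm_eq_iff prefixed_App)
    with EQ_app show ?thesis by (blast intro: eq_step_app EQ_rep_def[THEN iffD2])
  qed
qed

lemma palpha_if_EQ_rep:
  fixes P Q :: "'v ppt"
  assumes "EQ_rep P Q"
  shows "palpha P Q"
proof -
  have "nameless P = nameless Q"
    using assms
  proof (rule nameless_eq_coinduct)
    fix P Q :: "'v ppt"
    assume "EQ_rep P Q"
    then show "\<exists>P' Q'. length (fst P') = length (fst P) \<and> nameless P' = nameless P
        \<and> nameless Q' = nameless Q \<and> eq_step EQ_rep P' Q'"
      using EQ_rep_eq_step by (fastforce simp: palpha_iff_nameless)
  qed
  moreover have "length (fst P) = length (fst Q)"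
    using EQ_rep_eq_step[OF assms] by (auto simp: palpha_iff_nameless dest: eq_step_length)
  ultimately show ?thesis
    using assms by (simp add: palpha_iff_nameless EQ_rep_def)
qed

theorem EQ_iff_eq: "EQ M N \<longleftrightarrow> M = N"
proof -
  have "EQ M N \<longleftrightarrow> EQ_rep (rep_pfterm M) (rep_pfterm N)"
    by (simp add: EQ_rep_def prefixed_rep_pfterm Quotient3_abs_rep[OF Quotient3_pfterm])
  also have "\<dots> \<longleftrightarrow> palpha (rep_pfterm M) (rep_pfterm N)"
    using palpha_if_EQ_rep EQ_if_palpha
    by (fastforce simp: EQ_rep_def palpha_def Quotient3_abs_rep[OF Quotient3_pfterm])
  also have "\<dots> \<longleftrightarrow> M = N"
    by (rule Quotient3_rel_rep[OF Quotient3_pfterm])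
  finally show ?thesis .
qed

theorem mainTheorem5:
  shows "(\<forall>s t :: 'v pterm. closed s \<longrightarrow> closed t \<longrightarrow> (EQa ([], s) ([], t) \<longleftrightarrow> alpha s t))
       \<and> (\<forall>M N :: 'v pfterm. EQ M N \<longleftrightarrow> M = N)"
  using EQa_closed_iff_alpha EQ_iff_eq by blast

end
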